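(* Let $\Gamma$ be a $g\mathbf{PAI}_0$-theory. For all formulas $\varphi,\psi$: $[N(\varphi)]_{\sim_\Gamma}\le_\oplus[N(\psi)]_{\sim_\Gamma}$ in the quotient algebra $\langle N[Fm]/{\sim_\Gamma},\oplus,\rhd\rangle$ if and only if $N(\varphi)\le_\Gamma N(\psi)$ (equivalently, iff $\varphi\prec\psi\in\Gamma$).
   Context: Language: fix a countable set $Var$ of variables; $Fm$ is the set of formulas built from $Var$ with unary $\neg,\Box$ and binary $\vee,\to$. Abbreviations: $\varphi\wedge\psi:=\neg(\neg\varphi\vee\neg\psi)$, $\varphi\supset\psi:=\neg\varphi\vee\psi$, $\varphi\equiv\psi:=(\varphi\supset\psi)\wedge(\psi\supset\varphi)$, $\varphi\prec\psi:=\psi\to(\varphi\vee\neg\varphi)$. $g\mathbf{PAI}_0$ is the Hilbert calculus with axiom schemes (A1) $\varphi\supset(\psi\supset\varphi)$; (A2) $(\varphi\supset(\psi\supset\chi))\supset((\varphi\supset\psi)\supset(\varphi\supset\chi))$; (A3) $(\neg\varphi\supset\neg\psi)\supset(\psi\supset\varphi)$; (A4) $(\varphi\to\psi)\equiv(\Box(\varphi\supset\psi)\wedge(\psi\prec\varphi))$; (K) $\Box(\varphi\supset\psi)\supset(\Box\varphi\supset\Box\psi)$; (T) $\Box\varphi\supset\varphi$; (4) $\Box\varphi\supset\Box\Box\varphi$; (O1) $\varphi\prec\varphi$; (O2) $((\varphi\prec\psi)\wedge(\psi\prec\chi))\supset(\varphi\prec\chi)$; (O3) $(\varphi\prec\psi)\supset((\varphi\vee\psi)\prec\psi)$;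 (O4) $((\varphi\prec\psi)\equiv(\varphi\prec\neg\psi))\wedge((\varphi\prec\psi)\equiv(\neg\varphi\prec\psi))$; (O5) $((\varphi\prec\psi)\equiv(\varphi\prec\Box\psi))\wedge((\varphi\prec\psi)\equiv(\Box\varphi\prec\psi))$; (C1) $(\varphi\prec(\varphi\vee\psi))\wedge(\psi\prec(\varphi\vee\psi))$; (C2) $((\varphi\prec\chi)\wedge(\psi\prec\chi))\supset((\varphi\vee\psi)\prec\chi)$; (C3) $((\varphi\prec\chi)\wedge(\chi\prec\varphi)\wedge(\psi\prec\zeta)\wedge(\zeta\prec\psi))\supset((\varphi\to\psi)\prec(\chi\to\zeta))$; rules (MP) from $\varphi,\varphi\supset\psi$ infer $\psi$, (Nec$_g$) from $\varphi$ infer $\Box\varphi$. A $g\mathbf{PAI}_0$-theory is a set of formulas closed under derivability in this calculus. $N$ is the map from $Fm$ onto the algebra of terms over $Var$ in binary symbols $\oplus,\rhd$ given by $N(p)=p$, $N(\neg\varphi)=N(\Box\varphi)=N(\varphi)$, $N(\varphi\vee\psi)=N(\varphi)\oplus N(\psi)$, $N(\varphi\to\psi)=N(\varphi)\rhd N(\psi)$; $N[Fm]$ is its image. For a theory $\Gamma$ define on $N[Fm]$: $N(\varphi)\le_\Gamma N(\psi)$ iff $\varphi\prec\psi\in\Gamma$ (this does not depend on the chosen preimages), and $N(\varphi)\sim_\Gamma N(\psi)$ iff $N(\varphi)\le_\Gamma N(\psi)$ and $N(\psi)\le_\Gamma N(\varphi)$; $\sim_\Gamma$ is a congruence of $\langle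 N[Fm],\oplus,\rhd\rangle$, and $\langle N[Fm]/{\sim_\Gamma},\oplus,\rhd\rangle$ is the quotient. On the quotient, $x\le_\oplus y$ iff $x\oplus y=y$. *)

theory Defs
  imports Main
begin

datatype fm = Var nat | Neg fm | Box fm | Disj fm fm | Imp fm fm

definition Conj :: "fm \<Rightarrow> fm \<Rightarrow> fm" where
  "Conj a b = Neg (Disj (Neg a) (Neg b))"
definition Sup :: "fm \<Rightarrow> fm \<Rightarrow> fm" where
  "Sup a b = Disj (Neg a) b"
definition Eqv :: "fm \<Rightarrow> fm \<Rightarrow> fm" where
  "Eqv a b = Conj (Sup a b) (Sup b a)"
definition Prec :: "fm \<Rightarrow> fm \<Rightarrow> fm" where
  "Prec a b = Imp b (Disj a (Neg a))"

inductive axiom :: "fm \<Rightarrow> bool" where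
  A1: "axiom (Sup a (Sup b a))"
| A2: "axiom (Sup (Sup a (Sup b c)) (Sup (Sup a b) (Sup a c)))"
| A3: "axiom (Sup (Sup (Neg a) (Neg b)) (Sup b a))"
| A4: "axiom (Eqv (Imp a b) (Conj (Box (Sup a b)) (Prec b a)))"
| K: "axiom (Sup (Box (Sup a b)) (Sup (Box a) (Box b)))"
| T: "axiom (Sup (Box a) a)"
| Four: "axiom (Sup (Box a) (Box (Box a)))"
| O1: "axiom (Prec a a)"
| O2: "axiom (Sup (Conj (Prec a b) (Prec b c)) (Prec a c))"
| O3: "axiom (Sup (Prec a b) (Prec (Disj a b) b))"
| O4: "axiom (Conj (Eqv (Prec a b) (Prec a (Neg b))) (Eqv (Prec a b) (Prec (Neg a) b)))"
| O5: "axiom (Conj (Eqv (Prec a b) (Prec a (Box b))) (Eqv (Prec a b) (Prec (Box a) b)))"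
| C1: "axiom (Conj (Prec a (Disj a b)) (Prec b (Disj a b)))"
| C2: "axiom (Sup (Conj (Prec a c) (Prec b c)) (Prec (Disj a b) c))"
| C3: "axiom (Sup (Conj (Conj (Conj (Prec a c) (Prec c a)) (Prec b d)) (Prec d b))
                  (Prec (Imp a b) (Imp c d)))"

inductive derivable :: "fm set \<Rightarrow> fm \<Rightarrow> bool" for G where
  hyp: "a \<in> G \<Longrightarrow> derivable G a"
| ax: "axiom a \<Longrightarrow> derivable G a"
| MP: "derivable G a \<Longrightarrow> derivable G (Sup a b) \<Longrightarrow> derivable G b"
| Nec: "derivable G a \<Longrightarrow> derivable G (Box a)"

definition is_theory :: "fm set \<Rightarrow> bool" where
  "is_theory G \<longleftrightarrow> (\<forall>a. derivable G a \<longrightarrow> a \<in> G)"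

datatype tm = TVar nat | Oplus tm tm | Rhd tm tm

fun N :: "fm \<Rightarrow> tm" where
  "N (Var p) = TVar p"
| "N (Neg a) = N a"
| "N (Box a) = N a"
| "N (Disj a b) = Oplus (N a) (N b)"
| "N (Imp a b) = Rhd (N a) (N b)"

definition leG :: "fm set \<Rightarrow> tm \<Rightarrow> tm \<Rightarrow> bool" where
  "leG G x y \<longleftrightarrow> (\<exists>a b. N a = x \<and> N b = y \<and> Prec a b \<in> G)"

definition simG :: "fm set \<Rightarrow> (tm \<times> tm) set" where
  "simG G = {(x, y). x \<in> range N \<and> y \<in> range N \<and> leG G x y \<and> leG G y x}"

definition cls :: "fm set \<Rightarrow> tm \<Rightarrow> tm set" where
  "cls G x = simG G `` {x}"

definition quot :: "fm set \<Rightarrow> tm set set" where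
  "quot G = range N // simG G"

definition qoplus :: "fm set \<Rightarrow> tm set \<Rightarrow> tm set \<Rightarrow> tm set" where
  "qoplus G X Y = simG G `` {Oplus a b | a b. a \<in> X \<and> b \<in> Y}"

definition qle_oplus :: "fm set \<Rightarrow> tm set \<Rightarrow> tm set \<Rightarrow> bool" where
  "qle_oplus G X Y \<longleftrightarrow> qoplus G X Y = Y"

end

theory Submission
  imports Defs
begin

text \<open>Every formula \<open>a\<close> is mutually \<open>\<prec>\<close>-related to the canonical preimage
\<open>fm_of_tm (N a)\<close> of its \<open>N\<close>-image (by O1, O4, O5 and the congruence axioms C1--C3), so
whether \<open>Prec a b \<in> \<Gamma>\<close> depends only on \<open>N a\<close> and \<open>N b\<close>: \<open>\<le>\<^sub>\<Gamma>\<close> is well defined and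
\<open>\<sim>\<^sub>\<Gamma>\<close> is an equivalence whose class of \<open>N a\<close> consists of the \<open>N c\<close> with \<open>a\<close> and \<open>c\<close>
mutually \<open>\<prec>\<close>-related.  Monotonicity of disjunction makes the sum of the classes of \<open>N a\<close>
and \<open>N b\<close> the class of \<open>N (Disj a b)\<close>; hence \<open>[N a] \<le>\<^sub>\<oplus> [N b]\<close> says that \<open>Disj a b\<close> and
\<open>b\<close> are mutually \<open>\<prec>\<close>-related, which by C1, O2 and O3 is equivalent to \<open>Prec a b \<in> \<Gamma>\<close>.\<close>

text \<open>The deduction theorem fails for \<^const>\<open>derivable\<close> because of global necessitation,
so propositional reasoning is done in the fragment with axioms A1--A3 and modus ponens only.\<close>

inductive prop_derivable :: "fm set \<Rightarrow> fm \<Rightarrow> bool" for H where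
  hyp: "a \<in> H \<Longrightarrow> prop_derivable H a"
| A1: "prop_derivable H (Sup a (Sup b a))"
| A2: "prop_derivable H (Sup (Sup a (Sup b c)) (Sup (Sup a b) (Sup a c)))"
| A3: "prop_derivable H (Sup (Sup (Neg a) (Neg b)) (Sup b a))"
| MP: "prop_derivable H a \<Longrightarrow> prop_derivable H (Sup a b) \<Longrightarrow> prop_derivable H b"

lemma prop_mp: "prop_derivable H (Sup a b) \<Longrightarrow> prop_derivable H a \<Longrightarrow> prop_derivable H b"
  using prop_derivable.MP by blast

lemma prop_Sup_refl: "prop_derivable H (Sup a a)"
  using prop_mp[OF prop_mp[OF prop_derivable.A2 prop_derivable.A1] prop_derivable.A1] .

lemma prop_derivable_mono:
  assumes "prop_derivable H a" and "H \<subseteq> H'"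
  shows "prop_derivable H' a"
  using assms by (induction rule: prop_derivable.induct) (auto intro: prop_derivable.intros)

lemma prop_deduction: "prop_derivable (insert a H) b \<Longrightarrow> prop_derivable H (Sup a b)"
proof (induction rule: prop_derivable.induct)
  case (hyp c)
  then show ?case
    using prop_Sup_refl prop_mp[OF prop_derivable.A1 prop_derivable.hyp] by auto
next
  case (MP c d)
  show ?case using prop_mp[OF prop_mp[OF prop_derivable.A2 MP.IH(2)] MP.IH(1)] .
qed (auto intro: prop_mp[OF prop_derivable.A1] prop_derivable.intros)

lemma prop_Sup_trans:
  assumes "prop_derivable H (Sup a b)" and "prop_derivable H (Sup b c)"
  shows "prop_derivable H (Sup a c)"
proof -
  have "prop_derivable (insert a H) x" if "prop_derivable H x" for x
    using prop_derivable_mono[OF that] by blast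
  with assms have "prop_derivable (insert a H) c"
    by (meson insertI1 prop_derivable.hyp prop_mp)
  then show ?thesis by (rule prop_deduction)
qed

lemma prop_double_neg_elim: "prop_derivable H (Sup (Neg (Neg a)) a)"
proof -
  let ?H = "insert (Neg (Neg a)) H"
  have nna: "prop_derivable ?H (Neg (Neg a))" by (simp add: prop_derivable.hyp)
  have "prop_derivable ?H (Sup (Neg (Neg (Neg (Neg a)))) (Neg (Neg a)))"
    using prop_mp[OF prop_derivable.A1 nna] .
  then have "prop_derivable ?H (Sup (Neg (Neg a)) a)"
    using prop_mp[OF prop_derivable.A3] prop_mp[OF prop_derivable.A3] by blast
  then have "prop_derivable ?H a" using nna by (rule prop_mp)
  then show ?thesis by (rule prop_deduction)
qed

lemma prop_double_neg_intro: "prop_derivable H (Sup a (Neg (Neg a)))"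
  using prop_mp[OF prop_derivable.A3 prop_double_neg_elim] .

lemma prop_contrapos:
  "prop_derivable H (Sup a b) \<Longrightarrow> prop_derivable H (Sup (Neg b) (Neg a))"
  using prop_mp[OF prop_derivable.A3]
    prop_Sup_trans[OF prop_Sup_trans[OF prop_double_neg_elim] prop_double_neg_intro] by blast

lemma prop_ConjD1: "prop_derivable H (Sup (Conj a b) a)"
proof -
  let ?H = "insert (Neg a) H"
  have "prop_derivable ?H (Neg a)" by (simp add: prop_derivable.hyp)
  then have "prop_derivable ?H (Sup a (Neg b))"
    using prop_mp[OF prop_derivable.A3 prop_mp[OF prop_derivable.A1]] by blast
  then have "prop_derivable H (Sup (Neg (Sup a (Neg b))) (Neg (Neg a)))"
    using prop_contrapos prop_deduction by blast
  then show ?thesis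
    using prop_Sup_trans prop_double_neg_elim by (simp add: Conj_def Sup_def)
qed

lemma prop_ConjD2: "prop_derivable H (Sup (Conj a b) b)"
  using prop_Sup_trans[OF prop_contrapos[OF prop_derivable.A1] prop_double_neg_elim]
  by (simp add: Conj_def Sup_def)

lemma prop_ConjI: "prop_derivable H (Sup a (Sup b (Conj a b)))"
proof -
  let ?H = "insert (Sup a (Neg b)) (insert a H)"
  have "prop_derivable ?H (Neg b)"
    by (meson insertI1 insertI2 prop_derivable.hyp prop_mp)
  then have "prop_derivable (insert a H) (Sup (Neg (Neg b)) (Neg (Sup a (Neg b))))"
    using prop_contrapos prop_deduction by blast
  then have "prop_derivable (insert a H) (Sup b (Conj a b))"
    using prop_Sup_trans[OF prop_double_neg_intro] by (simp add: Conj_def Sup_def)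
  then show ?thesis by (rule prop_deduction)
qed

lemma derivable_if_prop_derivable: "prop_derivable G a \<Longrightarrow> derivable G a"
  by (induction rule: prop_derivable.induct) (auto intro: derivable.intros axiom.intros)

fun fm_of_tm :: "tm \<Rightarrow> fm" where
  "fm_of_tm (TVar p) = Var p"
| "fm_of_tm (Oplus x y) = Disj (fm_of_tm x) (fm_of_tm y)"
| "fm_of_tm (Rhd x y) = Imp (fm_of_tm x) (fm_of_tm y)"

locale gPAI_theory =
  fixes G :: "fm set"
  assumes closed: "is_theory G"
begin

lemma mem_if_prop_derivable: "prop_derivable G a \<Longrightarrow> a \<in> G"
  using closed derivable_if_prop_derivable unfolding is_theory_def by blast

lemma axiom_mem: "axiom a \<Longrightarrow> a \<in> G"
  using closed derivable.ax unfolding is_theory_def by blast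

lemma Sup_mp: "Sup a b \<in> G \<Longrightarrow> a \<in> G \<Longrightarrow> b \<in> G"
  using mem_if_prop_derivable prop_mp prop_derivable.hyp by blast

lemma Conj_mem_iff: "Conj a b \<in> G \<longleftrightarrow> a \<in> G \<and> b \<in> G"
  using mem_if_prop_derivable prop_derivable.hyp
    prop_mp[OF prop_ConjD1] prop_mp[OF prop_ConjD2] prop_mp[OF prop_mp[OF prop_ConjI]]
  by meson

lemma Eqv_mem_iff: "Eqv a b \<in> G \<Longrightarrow> a \<in> G \<longleftrightarrow> b \<in> G"
  unfolding Eqv_def using Conj_mem_iff Sup_mp by blast

lemma Prec_refl: "Prec a a \<in> G"
  by (rule axiom_mem) (rule O1)

lemma Prec_trans: "Prec a b \<in> G \<Longrightarrow> Prec b c \<in> G \<Longrightarrow> Prec a c \<in> G"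
  using Sup_mp[OF axiom_mem[OF O2]] Conj_mem_iff by blast

lemma Prec_Neg_left_iff: "Prec (Neg a) b \<in> G \<longleftrightarrow> Prec a b \<in> G"
  and Prec_Neg_right_iff: "Prec a (Neg b) \<in> G \<longleftrightarrow> Prec a b \<in> G"
  using axiom_mem[OF O4] Conj_mem_iff Eqv_mem_iff by blast+

lemma Prec_Box_left_iff: "Prec (Box a) b \<in> G \<longleftrightarrow> Prec a b \<in> G"
  and Prec_Box_right_iff: "Prec a (Box b) \<in> G \<longleftrightarrow> Prec a b \<in> G"
  using axiom_mem[OF O5] Conj_mem_iff Eqv_mem_iff by blast+

lemma Prec_Disj_upper1: "Prec a (Disj a b) \<in> G"
  and Prec_Disj_upper2: "Prec b (Disj a b) \<in> G"
  using axiom_mem[OF C1] Conj_mem_iff by blast+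

lemma Prec_Disj_least: "Prec a c \<in> G \<Longrightarrow> Prec b c \<in> G \<Longrightarrow> Prec (Disj a b) c \<in> G"
  using Sup_mp[OF axiom_mem[OF C2]] Conj_mem_iff by blast

lemma Prec_Disj_absorb: "Prec a b \<in> G \<Longrightarrow> Prec (Disj a b) b \<in> G"
  using Sup_mp[OF axiom_mem[OF O3]] by blast

lemma Prec_Disj_mono:
  "Prec a a' \<in> G \<Longrightarrow> Prec b b' \<in> G \<Longrightarrow> Prec (Disj a b) (Disj a' b') \<in> G"
  using Prec_Disj_least Prec_trans Prec_Disj_upper1 Prec_Disj_upper2 by blast

lemma Prec_Imp_cong:
  "Prec a a' \<in> G \<Longrightarrow> Prec a' a \<in> G \<Longrightarrow> Prec b b' \<in> G \<Longrightarrow> Prec b' b \<in> G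
    \<Longrightarrow> Prec (Imp a b) (Imp a' b') \<in> G"
  using Sup_mp[OF axiom_mem[OF C3]] Conj_mem_iff by blast

lemma Prec_fm_of_tm_N: "Prec a (fm_of_tm (N a)) \<in> G \<and> Prec (fm_of_tm (N a)) a \<in> G"
proof (induction a)
  case (Var p)
  then show ?case using Prec_refl by simp
next
  case (Neg a)
  then show ?case using Prec_Neg_left_iff Prec_Neg_right_iff by simp
next
  case (Box a)
  then show ?case using Prec_Box_left_iff Prec_Box_right_iff by simp
next
  case (Disj a b)
  then show ?case using Prec_Disj_mono by simp
next
  case (Imp a b)
  then show ?case using Prec_Imp_cong by simp
qed

lemma Prec_if_N_eq:
  assumes "N a = N b"
  shows "Prec a b \<in> G"
proof -
  have "Prec a (fm_of_tm (N b)) \<in> G"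
    using Prec_fm_of_tm_N[of a] assms by simp
  then show ?thesis using Prec_fm_of_tm_N[of b] Prec_trans by blast
qed

lemma leG_N_iff: "leG G (N a) (N b) \<longleftrightarrow> Prec a b \<in> G"
proof
  assume "leG G (N a) (N b)"
  then obtain a' b' where "N a' = N a" "N b' = N b" "Prec a' b' \<in> G"
    unfolding leG_def by blast
  moreover have "Prec a a' \<in> G" "Prec b' b \<in> G"
    using calculation(1,2) by (simp_all add: Prec_if_N_eq)
  ultimately show "Prec a b \<in> G" using Prec_trans by blast
next
  assume "Prec a b \<in> G"
  then show "leG G (N a) (N b)" unfolding leG_def by blast
qed

lemma simG_N_iff: "(N a, N b) \<in> simG G \<longleftrightarrow> Prec a b \<in> G \<and> Prec b a \<in> G"
  unfolding simG_def by (simp add: leG_N_iff)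

lemma equiv_simG: "equiv (range N) (simG G)"
proof (rule equivI)
  show "simG G \<subseteq> range N \<times> range N"
    unfolding simG_def by blast
  show "refl_on (range N) (simG G)"
    unfolding refl_on_def simG_def by (auto simp: leG_N_iff Prec_refl)
  show "sym (simG G)"
    unfolding sym_def simG_def by blast
  show "trans (simG G)"
  proof (rule transI)
    fix x y z
    assume xy: "(x, y) \<in> simG G" and yz: "(y, z) \<in> simG G"
    then obtain a b c where "x = N a" "y = N b" "z = N c"
      unfolding simG_def by blast
    with xy yz show "(x, z) \<in> simG G"
      by (simp add: simG_N_iff) (blast intro: Prec_trans)
  qed
qed

lemma cls_N_eq_iff: "cls G (N a) = cls G (N b) \<longleftrightarrow> Prec a b \<in> G \<and> Prec b a \<in> G"
  unfolding cls_def using equiv_class_eq_iff[OF equiv_simG] simG_N_iff by blast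

lemma qoplus_cls_N: "qoplus G (cls G (N a)) (cls G (N b)) = cls G (N (Disj a b))"
proof -
  let ?S = "{Oplus u v | u v. u \<in> cls G (N a) \<and> v \<in> cls G (N b)}"
  have related: "(N (Disj a b), s) \<in> simG G" if "s \<in> ?S" for s
  proof -
    obtain c d where s: "s = N (Disj c d)" and "(N a, N c) \<in> simG G" "(N b, N d) \<in> simG G"
      using \<open>s \<in> ?S\<close> by (auto simp: cls_def simG_def)
    then have "Prec (Disj a b) (Disj c d) \<in> G" "Prec (Disj c d) (Disj a b) \<in> G"
      by (simp_all add: simG_N_iff Prec_Disj_mono)
    then show ?thesis unfolding s simG_N_iff ..
  qed
  have "N (Disj a b) \<in> ?S"
    using Prec_refl simG_N_iff by (fastforce simp: cls_def)
  then have "simG G `` ?S = simG G `` {N (Disj a b)}"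
    using related equiv_simG unfolding equiv_def trans_def by blast
  then show ?thesis unfolding qoplus_def cls_def .
qed

lemma qle_oplus_cls_N_iff: "qle_oplus G (cls G (N a)) (cls G (N b)) \<longleftrightarrow> Prec a b \<in> G"
proof -
  have "qle_oplus G (cls G (N a)) (cls G (N b)) \<longleftrightarrow>
        Prec (Disj a b) b \<in> G \<and> Prec b (Disj a b) \<in> G"
    unfolding qle_oplus_def qoplus_cls_N cls_N_eq_iff ..
  also have "\<dots> \<longleftrightarrow> Prec a b \<in> G"
    using Prec_Disj_absorb Prec_Disj_upper1 Prec_Disj_upper2 Prec_trans by blast
  finally show ?thesis .
qed

end

theorem mainTheorem11:
  assumes "is_theory G"
  shows "(qle_oplus G (cls G (N a)) (cls G (N b)) \<longleftrightarrow> leG G (N a) (N b))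
       \<and> (qle_oplus G (cls G (N a)) (cls G (N b)) \<longleftrightarrow> Prec a b \<in> G)"
proof -
  interpret gPAI_theory G using assms by unfold_locales
  show ?thesis using qle_oplus_cls_N_iff leG_N_iff by blast
qed

end
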